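(* The following hold. 1. Let $C>1$, $k\in\mathbb{N}\setminus\{1\}$ and $p=p(n)\geq Cn^{-2/k}$. If $k'\leq k$ and $F_1:=K_{k'}$, then $\Phi_{F_1}\geq Cn$. 2. Let $C>1$, $k\in\mathbb{N}\setminus\{1\}$ and $p=p(n)\geq Cn^{-2/k}$. Let $3\leq k'\leq k$, let $F_2:=K_{k'}^-$ be the complete graph on $k'$ vertices with one edge removed, and let $w\in V(F_2)$ be one of the endpoints of the removed edge. Then $\Phi_{F_2}\geq Cn$ and $\Phi_{F_2,w}\geq\min\{Cn^{1-\frac{2}{k}},Cn^{\frac{2}{k}}\}\geq Cn^{\frac{1}{k}}$. 3. Let $F_3,F_4$ be graphs with vertex subsets $W_3\subseteq V(F_3)$, $W_4\subseteq V(F_4)$ (each spanning no edges), let $\Phi_3:=\Phi_{F_3,W_3}$ and $\Phi_4:=\Phi_{F_4,W_4}$, and suppose $\Phi_3,\Phi_4\geq1$. Let $F_5$ be the union of $F_3$ and $F_4$ meeting in exactly one vertex $x\in(V(F_3)\setminus W_3)\cap(V(F_4)\setminus W_4)$, and let $F_6$ be the disjoint union of $F_3$ and $F_4$. With $W_5:=W_3\sqcup W_4$, we have $\Phi_{F_5,W_5}\geq\min\{\Phi_3,\Phi_4,\Phi_3\Phi_4n^{-1}\}$ and $\Phi_{F_6,W_5}=\min\{\Phi_3,\Phi_4\}$.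
   Context: For a graph $H$ write $v_H,e_H$ for its numbers of vertices and edges. For a graph $F$, an integer $n$, a probability $p$ and a set $W\subseteq V(F)$ spanning no edges of $F$, define $\Phi_{F,W}=\Phi_{F,W}(n,p):=\min\{n^{v_H-v_{H[W]}}p^{e_H}: H\subseteq F,\ e_H>0\}$, where $v_{H[W]}=|V(H)\cap W|$; and $\Phi_F:=\Phi_{F,\emptyset}=\min\{n^{v_H}p^{e_H}:H\subseteq F, e_H>0\}$. For a single vertex $w$ write $\Phi_{F,w}:=\Phi_{F,\{w\}}$. *)

theory Defs
  imports Complex_Main "HOL-Library.Extended_Real"
begin

type_synonym 'a graph = "'a set \<times> 'a set set"

definition is_graph :: "'a graph \<Rightarrow> bool" where
  "is_graph G \<longleftrightarrow> finite (fst G) \<and>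
     (\<forall>e\<in>snd G. \<exists>x y. x \<noteq> y \<and> x \<in> fst G \<and> y \<in> fst G \<and> e = {x, y})"

definition subgraph :: "'a graph \<Rightarrow> 'a graph \<Rightarrow> bool" where
  "subgraph H G \<longleftrightarrow> is_graph H \<and> fst H \<subseteq> fst G \<and> snd H \<subseteq> snd G"

definition spans_no_edges :: "'a set \<Rightarrow> 'a graph \<Rightarrow> bool" where
  "spans_no_edges W G \<longleftrightarrow> W \<subseteq> fst G \<and> (\<forall>e\<in>snd G. \<not> e \<subseteq> W)"

text \<open>Phi_{F,W}(n,p); the minimum over an empty family is +infinity.\<close>
definition Phi :: "'a graph \<Rightarrow> 'a set \<Rightarrow> nat \<Rightarrow> real \<Rightarrow> ereal" where
  "Phi F W n p = (INF H \<in> {H. subgraph H F \<and> card (snd H) > 0}.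
      ereal (real n ^ (card (fst H) - card (fst H \<inter> W)) * p ^ card (snd H)))"

definition complete_graph :: "nat \<Rightarrow> nat graph" where
  "complete_graph m = ({..<m}, {{i, j} | i j. i < m \<and> j < m \<and> i \<noteq> j})"

definition complete_graph_minus :: "nat \<Rightarrow> nat graph" where
  "complete_graph_minus m = ({..<m}, snd (complete_graph m) - {{0, 1}})"

end

theory Submission
  imports Defs
begin

text \<open>
  Call n^(v_H - |V(H) \<inter> W|) p^(e_H) the weight of H.  If H has e_H > 0 edges and lies in a
  graph on at most k vertices, then 2 e_H \<le> v_H (v_H - 1) \<le> k (v_H - 1), so p \<ge> C n^(-2/k)
  gives weight at least C n^(v_H - 2 e_H / k) \<ge> C n.  Rooting K_k^- at an endpoint w of its
  missing edge costs a factor n whenever w \<in> V(H); this is paid for either by the other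
  endpoint being absent (then v_H \<le> k - 1) or by the missing edge (then
  2 e_H + 2 \<le> v_H (v_H - 1)).

  A subgraph H of F_3 \<union> F_4 splits into its traces H_3 on F_3 and H_4 on F_4, whose weights
  multiply to the weight of H times n^s, where s \<le> 1 counts the shared vertices in H.  If one
  trace has no edges, H weighs at least the other trace; otherwise H weighs at least
  \<Phi>_3 \<Phi>_4 / n^s.
\<close>

definition Phi_weight :: "nat \<Rightarrow> real \<Rightarrow> 'a set \<Rightarrow> 'a graph \<Rightarrow> real" where
  "Phi_weight n p W H = real n ^ card (fst H - W) * p ^ card (snd H)"

definition graph_inter :: "'a graph \<Rightarrow> 'a graph \<Rightarrow> 'a graph" where
  "graph_inter H F = (fst H \<inter> fst F, snd H \<inter> snd F)"

lemma graph_inter_simps [simp]: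
  "fst (graph_inter H F) = fst H \<inter> fst F" "snd (graph_inter H F) = snd H \<inter> snd F"
  by (simp_all add: graph_inter_def)

lemma is_graph_finite_vertices: "is_graph G \<Longrightarrow> finite (fst G)"
  unfolding is_graph_def by simp

lemma is_graph_edges_subset_pairs: "is_graph G \<Longrightarrow> snd G \<subseteq> {B. B \<subseteq> fst G \<and> card B = 2}"
  unfolding is_graph_def by auto

lemma is_graph_edge_subset: "is_graph G \<Longrightarrow> e \<in> snd G \<Longrightarrow> e \<subseteq> fst G"
  using is_graph_edges_subset_pairs by blast

lemma is_graph_finite_edges: "is_graph G \<Longrightarrow> finite (snd G)"
  by (metis finite_Collect_subsets finite_Collect_conjI is_graph_edges_subset_pairs
      is_graph_finite_vertices rev_finite_subset)

lemma is_graph_subset_edges: "is_graph G \<Longrightarrow> E \<subseteq> snd G \<Longrightarrow> is_graph (fst G, E)"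
  unfolding is_graph_def by auto

lemma subgraph_trans: "subgraph H G \<Longrightarrow> subgraph G F \<Longrightarrow> subgraph H F"
  unfolding subgraph_def by blast

lemma subgraph_finite_vertices: "subgraph H G \<Longrightarrow> finite (fst H)"
  unfolding subgraph_def by (blast dest: is_graph_finite_vertices)

lemma subgraph_card_vertices_le: "subgraph H F \<Longrightarrow> is_graph F \<Longrightarrow> card (fst H) \<le> card (fst F)"
  unfolding subgraph_def by (simp add: card_mono is_graph_finite_vertices)

lemma subgraph_card_vertices_less:
  assumes "subgraph H F" "is_graph F" "x \<in> fst F" "x \<notin> fst H"
  shows "card (fst H) < card (fst F)"
  using assms unfolding subgraph_def by (intro psubset_card_mono) (auto simp: is_graph_finite_vertices)

lemma subgraph_graph_inter:
  assumes "is_graph H" "is_graph F"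
  shows "subgraph (graph_inter H F) F"
  unfolding subgraph_def is_graph_def graph_inter_simps
proof (intro conjI ballI)
  show "finite (fst H \<inter> fst F)"
    using assms(1) by (simp add: is_graph_finite_vertices)
next
  fix e
  assume e: "e \<in> snd H \<inter> snd F"
  then obtain x y where "x \<noteq> y" "x \<in> fst F" "y \<in> fst F" "e = {x, y}"
    using assms(2) unfolding is_graph_def by blast
  moreover have "e \<subseteq> fst H"
    using assms(1) e by (blast dest: is_graph_edge_subset)
  ultimately show "\<exists>x y. x \<noteq> y \<and> x \<in> fst H \<inter> fst F \<and> y \<in> fst H \<inter> fst F \<and> e = {x, y}"
    by auto
qed (use assms(2) in auto)

lemma twice_card_edges_le:
  assumes "is_graph G"
  shows "2 * card (snd G) \<le> card (fst G) * (card (fst G) - 1)"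
proof -
  have fin: "finite (fst G)"
    using assms by (rule is_graph_finite_vertices)
  have "card (snd G) \<le> card {B. B \<subseteq> fst G \<and> card B = 2}"
    using fin is_graph_edges_subset_pairs[OF assms] by (intro card_mono) auto
  also have "\<dots> = card (fst G) choose 2"
    using fin by (rule n_subsets)
  finally show ?thesis
    using times_binomial_minus1_eq[of 2 "card (fst G)"] by simp
qed

lemma twice_card_edges_less:
  assumes "is_graph G" "a \<in> fst G" "b \<in> fst G" "a \<noteq> b" "{a, b} \<notin> snd G"
  shows "2 * card (snd G) + 2 \<le> card (fst G) * (card (fst G) - 1)"
proof -
  have fin: "finite (fst G)"
    using assms(1) by (rule is_graph_finite_vertices)
  have "snd G \<subset> {B. B \<subseteq> fst G \<and> card B = 2}"
    using assms is_graph_edges_subset_pairs[OF assms(1)] by auto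
  then have "card (snd G) < card {B. B \<subseteq> fst G \<and> card B = 2}"
    using fin by (intro psubset_card_mono) auto
  also have "\<dots> = card (fst G) choose 2"
    using fin by (rule n_subsets)
  finally show ?thesis
    using times_binomial_minus1_eq[of 2 "card (fst G)"] by simp
qed

lemma is_graph_complete_graph: "is_graph (complete_graph m)"
  unfolding is_graph_def complete_graph_def by auto

lemma fst_complete_graph_minus [simp]: "fst (complete_graph_minus m) = {..<m}"
  by (simp add: complete_graph_minus_def complete_graph_def)

lemma is_graph_complete_graph_minus: "is_graph (complete_graph_minus m)"
  using is_graph_subset_edges[OF is_graph_complete_graph, of "snd (complete_graph m) - {{0, 1}}" m]
  by (simp add: complete_graph_minus_def complete_graph_def)

lemma Phi_weight_altdef:
  "finite (fst H) \<Longrightarrow>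
    Phi_weight n p W H = real n ^ (card (fst H) - card (fst H \<inter> W)) * p ^ card (snd H)"
  by (simp add: Phi_weight_def card_Diff_subset_Int)

lemma Phi_weight_nonneg: "0 \<le> p \<Longrightarrow> 0 \<le> Phi_weight n p W H"
  by (simp add: Phi_weight_def)

lemma Phi_weight_mono:
  assumes "finite (fst H')" "fst H - W \<subseteq> fst H' - W'" "card (snd H) = card (snd H')"
    and "0 < n" "0 \<le> p"
  shows "Phi_weight n p W H \<le> Phi_weight n p W' H'"
proof -
  have "card (fst H - W) \<le> card (fst H' - W')"
    using assms(1,2) by (intro card_mono) auto
  then have "real n ^ card (fst H - W) \<le> real n ^ card (fst H' - W')"
    using assms(4) by (intro power_increasing) auto
  then show ?thesis
    unfolding Phi_weight_def assms(3) using assms(5) by (intro mult_right_mono) auto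
qed

lemma Phi_greatest:
  assumes "\<And>H. subgraph H F \<Longrightarrow> 0 < card (snd H) \<Longrightarrow> c \<le> ereal (Phi_weight n p W H)"
  shows "c \<le> Phi F W n p"
  unfolding Phi_def
proof (rule INF_greatest, clarify)
  fix H :: "'a graph"
  assume "subgraph H F" "0 < card (snd H)"
  with assms[of H] show "c \<le> ereal (real n ^ (card (fst H) - card (fst H \<inter> W)) * p ^ card (snd H))"
    by (simp add: Phi_weight_altdef subgraph_finite_vertices)
qed

lemma Phi_le_weight:
  assumes "subgraph H F" "0 < card (snd H)"
  shows "Phi F W n p \<le> ereal (Phi_weight n p W H)"
  unfolding Phi_def Phi_weight_altdef[OF subgraph_finite_vertices[OF assms(1)]]
  by (rule INF_lower) (use assms in auto)

lemma Phi_antimono_subgraph: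
  assumes "subgraph F' F" "W' \<inter> fst F' \<subseteq> W" "0 < n" "0 \<le> p"
  shows "Phi F W n p \<le> Phi F' W' n p"
proof (rule Phi_greatest)
  fix H :: "'a graph"
  assume H: "subgraph H F'" "0 < card (snd H)"
  have "Phi F W n p \<le> ereal (Phi_weight n p W H)"
    using subgraph_trans[OF H(1) assms(1)] H(2) by (rule Phi_le_weight)
  also have "Phi_weight n p W H \<le> Phi_weight n p W' H"
    using H(1) assms unfolding subgraph_def
    by (intro Phi_weight_mono) (auto simp: is_graph_finite_vertices)
  finally show "Phi F W n p \<le> ereal (Phi_weight n p W' H)"
    by simp
qed

lemma weight_lower_bound_of_density:
  fixes C p :: real and n k v e a :: nat
  assumes "1 \<le> C" "0 < n" "0 < k" "C * real n powr (- 2 / real k) \<le> p" "1 \<le> e"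
    and "a + 2 * e \<le> k * v"
  shows "C * real n powr (real a / real k) \<le> real n ^ v * p ^ e"
proof -
  let ?x = "- 2 * real e / real k"
  have "C * real n powr ?x \<le> C ^ e * real n powr ?x"
    using assms(1,5) power_increasing[of 1 e C] by (intro mult_right_mono) auto
  also have "\<dots> = (C * real n powr (- 2 / real k)) ^ e"
    by (simp add: power_mult_distrib powr_realpow[symmetric] powr_powr assms(2))
  also have "\<dots> \<le> p ^ e"
    using assms(1,4) by (intro power_mono) auto
  finally have p_bound: "C * real n powr ?x \<le> p ^ e" .
  have "real a + 2 * real e \<le> real k * real v"
    using of_nat_mono[OF assms(6)] by simp
  then have "real a / real k \<le> real v + ?x"
    using assms(3) by (simp add: field_simps)
  then have "real n powr (real a / real k) \<le> real n powr (real v + ?x)"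
    using assms(2) by (intro powr_mono) auto
  also have "\<dots> = real n ^ v * real n powr ?x"
    using assms(2) by (subst powr_add) (simp add: powr_realpow)
  finally have "C * real n powr (real a / real k) \<le> C * (real n ^ v * real n powr ?x)"
    by (rule mult_left_mono) (use assms(1) in simp)
  also have "\<dots> = real n ^ v * (C * real n powr ?x)"
    by (simp only: mult.left_commute)
  also have "\<dots> \<le> real n ^ v * p ^ e"
    using p_bound by (intro mult_left_mono) auto
  finally show ?thesis .
qed

lemma subgraph_edges_density_le:
  assumes "is_graph F" "card (fst F) \<le> k" "subgraph H F" "0 < card (snd H)"
  shows "k + 2 * card (snd H) \<le> k * card (fst H)"
proof -
  define v where "v = card (fst H)"
  have "v \<le> k"
    using subgraph_card_vertices_le[OF assms(3,1)] assms(2) unfolding v_def by simp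
  have edges: "2 * card (snd H) \<le> v * (v - 1)"
    using assms(3) twice_card_edges_le unfolding subgraph_def v_def by blast
  then have "1 \<le> v"
    using assms(4) by (cases v) auto
  have "v * (v - 1) \<le> k * (v - 1)"
    using \<open>v \<le> k\<close> by (rule mult_right_mono) simp
  moreover have "k * v = k + k * (v - 1)"
    using \<open>1 \<le> v\<close> by (cases v) auto
  ultimately show ?thesis
    using edges unfolding v_def by linarith
qed

lemma twice_edges_bound_arith:
  fixes k v e :: nat
  assumes "v < k" "0 < e" "2 * e \<le> v * (v - 1)"
  shows "k - 2 + 2 * e \<le> k * (v - 1)"
proof -
  have "0 < v * (v - 1)"
    using assms(2,3) by linarith
  then have "2 \<le> v"
    by simp
  then have "0 \<le> (int k - int v - 1) * (int v - 2)"
    using assms(1) by simp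
  then have "int k - 2 + int v * (int v - 1) \<le> int k * (int v - 1)"
    by (simp add: algebra_simps)
  moreover have "int (2 * e) \<le> int (v * (v - 1))"
    using assms(3) by (simp only: of_nat_le_iff)
  then have "2 * int e \<le> int v * (int v - 1)"
    using \<open>2 \<le> v\<close> by (simp add: of_nat_diff)
  ultimately have "int (k - 2 + 2 * e) \<le> int (k * (v - 1))"
    using assms(1) \<open>2 \<le> v\<close> by (simp add: of_nat_diff)
  then show ?thesis
    by (simp only: of_nat_le_iff)
qed

lemma Phi_ge_of_card_vertices_le:
  assumes "is_graph F" "card (fst F) \<le> k" "0 < k" "1 \<le> C" "0 < n"
    and "C * real n powr (- 2 / real k) \<le> p"
  shows "ereal (C * real n) \<le> Phi F {} n p"
proof (rule Phi_greatest)
  fix H :: "'a graph"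
  assume H: "subgraph H F" "0 < card (snd H)"
  then have "k + 2 * card (snd H) \<le> k * card (fst H)"
    using assms(1,2) by (rule subgraph_edges_density_le[rotated 2])
  then have "C * real n powr (real k / real k) \<le> real n ^ card (fst H) * p ^ card (snd H)"
    using assms H(2) by (intro weight_lower_bound_of_density) auto
  then show "ereal (C * real n) \<le> ereal (Phi_weight n p {} H)"
    using assms(3,5) by (simp add: Phi_weight_def)
qed

lemma subgraph_rooted_density_le:
  assumes "is_graph F" "card (fst F) \<le> k" "subgraph H F" "0 < card (snd H)"
    and "w \<in> fst F" "w' \<in> fst F" "w \<noteq> w'" "{w, w'} \<notin> snd F"
  shows "k - 2 + 2 * card (snd H) \<le> k * card (fst H - {w})
    \<or> 2 + 2 * card (snd H) \<le> k * card (fst H - {w})"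
proof -
  define v e where "v = card (fst H)" and "e = card (snd H)"
  have gH: "is_graph H"
    using assms(3) by (simp add: subgraph_def)
  have edges: "2 * e \<le> v * (v - 1)"
    using twice_card_edges_le[OF gH] unfolding v_def e_def .
  have "v \<le> k"
    using subgraph_card_vertices_le[OF assms(3,1)] assms(2) unfolding v_def by simp
  consider "w \<notin> fst H" | "w \<in> fst H" "w' \<notin> fst H" | "w \<in> fst H" "w' \<in> fst H"
    by blast
  then show ?thesis
  proof cases
    case 1
    have "k - 2 + 2 * e \<le> k * v"
      using subgraph_edges_density_le[OF assms(1-4)] unfolding v_def e_def by linarith
    then show ?thesis
      using 1 unfolding v_def e_def by simp
  next
    case 2
    have "v < k"
      using subgraph_card_vertices_less[OF assms(3,1,6) 2(2)] assms(2) unfolding v_def by simp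
    then have "k - 2 + 2 * e \<le> k * (v - 1)"
      using assms(4) edges unfolding e_def by (intro twice_edges_bound_arith)
    then show ?thesis
      using 2 unfolding v_def e_def by simp
  next
    case 3
    \<comment> \<open>here the missing edge {w, w'} pays for the vertex w\<close>
    have "{w, w'} \<notin> snd H"
      using assms(3,8) unfolding subgraph_def by auto
    then have "2 * e + 2 \<le> v * (v - 1)"
      using twice_card_edges_less[OF gH 3 assms(7)] unfolding v_def e_def by simp
    moreover have "v * (v - 1) \<le> k * (v - 1)"
      using \<open>v \<le> k\<close> by (rule mult_right_mono) simp
    ultimately have "2 + 2 * e \<le> k * (v - 1)"
      by linarith
    then show ?thesis
      using 3 unfolding v_def e_def by simp
  qed
qed

lemma Phi_singleton_ge_of_card_vertices_le:
  assumes "is_graph F" "card (fst F) \<le> k" "2 \<le> k" "1 \<le> C" "0 < n"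
    and "C * real n powr (- 2 / real k) \<le> p"
    and "w \<in> fst F" "w' \<in> fst F" "w \<noteq> w'" "{w, w'} \<notin> snd F"
  shows "ereal (min (C * real n powr (1 - 2 / real k)) (C * real n powr (2 / real k)))
    \<le> Phi F {w} n p"
proof (rule Phi_greatest)
  fix H :: "'a graph"
  assume H: "subgraph H F" "0 < card (snd H)"
  have weight_ge: "C * real n powr (real a / real k) \<le> Phi_weight n p {w} H"
    if "a + 2 * card (snd H) \<le> k * card (fst H - {w})" for a
    using that assms H(2) unfolding Phi_weight_def by (intro weight_lower_bound_of_density) auto
  have "real (k - 2) / real k = 1 - 2 / real k"
    using assms(3) by (simp add: of_nat_diff field_simps)
  from subgraph_rooted_density_le[OF assms(1,2) H assms(7-10)]
  have "min (C * real n powr (1 - 2 / real k)) (C * real n powr (2 / real k))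
      \<le> Phi_weight n p {w} H"
  proof
    assume "k - 2 + 2 * card (snd H) \<le> k * card (fst H - {w})"
    with weight_ge \<open>real (k - 2) / real k = 1 - 2 / real k\<close> show ?thesis
      by (metis min.coboundedI1)
  next
    assume "2 + 2 * card (snd H) \<le> k * card (fst H - {w})"
    with weight_ge show ?thesis
      by (metis min.coboundedI2 of_nat_numeral)
  qed
  then show "ereal (min (C * real n powr (1 - 2 / real k)) (C * real n powr (2 / real k)))
      \<le> ereal (Phi_weight n p {w} H)"
    by (simp only: ereal_less_eq)
qed

lemma powr_one_div_le_min_powr:
  fixes C :: real and n k :: nat
  assumes "0 \<le> C" "0 < n" "3 \<le> k"
  shows "C * real n powr (1 / real k) \<le> min (C * real n powr (1 - 2 / real k)) (C * real n powr (2 / real k))"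
proof -
  have "1 / real k \<le> 1 - 2 / real k" "1 / real k \<le> 2 / real k"
    using assms(3) by (simp_all add: field_simps)
  moreover have "1 \<le> real n"
    using assms(2) by simp
  ultimately show ?thesis
    using assms(1) by (simp add: mult_left_mono powr_mono)
qed

lemma Phi_complete_graph_ge:
  assumes "1 < C" "2 \<le> k" "0 < n" "C * real n powr (- 2 / real k) \<le> p" "k' \<le> k"
  shows "ereal (C * real n) \<le> Phi (complete_graph k') {} n p"
proof -
  have "card (fst (complete_graph k')) \<le> k"
    using assms(5) by (simp add: complete_graph_def)
  from Phi_ge_of_card_vertices_le[OF is_graph_complete_graph this _ _ assms(3,4)] assms(1,2)
  show ?thesis
    by simp
qed

lemma Phi_complete_graph_minus_ge:
  assumes "1 < C" "2 \<le> k" "0 < n" "C * real n powr (- 2 / real k) \<le> p" "k' \<le> k"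
  shows "ereal (C * real n) \<le> Phi (complete_graph_minus k') {} n p"
proof -
  have "card (fst (complete_graph_minus k')) \<le> k"
    using assms(5) by simp
  from Phi_ge_of_card_vertices_le[OF is_graph_complete_graph_minus this _ _ assms(3,4)] assms(1,2)
  show ?thesis
    by simp
qed

lemma Phi_complete_graph_minus_singleton_ge:
  assumes "1 < C" "2 \<le> k" "0 < n" "C * real n powr (- 2 / real k) \<le> p" "3 \<le> k'" "k' \<le> k"
    and "w \<in> {0, 1}"
  shows "ereal (min (C * real n powr (1 - 2 / real k)) (C * real n powr (2 / real k)))
    \<le> Phi (complete_graph_minus k') {w} n p"
proof -
  have "{w, 1 - w} = {0, 1}"
    using assms(7) by auto
  then have "{w, 1 - w} \<notin> snd (complete_graph_minus k')"
    by (simp add: complete_graph_minus_def)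
  moreover have "w \<in> fst (complete_graph_minus k')" "1 - w \<in> fst (complete_graph_minus k')"
    "w \<noteq> 1 - w" "card (fst (complete_graph_minus k')) \<le> k" "1 \<le> C"
    using assms by auto
  ultimately show ?thesis
    using Phi_singleton_ge_of_card_vertices_le[OF is_graph_complete_graph_minus _ assms(2) _ assms(3,4)]
    by blast
qed

text \<open>One locale for both the one-vertex gluing F_5 and the disjoint union F_6.\<close>

locale graph_gluing =
  fixes F3 F4 :: "'a graph" and W3 W4 :: "'a set"
  assumes graph3: "is_graph F3" and graph4: "is_graph F4"
    and spans3: "spans_no_edges W3 F3" and spans4: "spans_no_edges W4 F4"
    and card_shared_le: "card (fst F3 \<inter> fst F4) \<le> 1"
    and shared_disjoint_W: "fst F3 \<inter> fst F4 \<inter> (W3 \<union> W4) = {}"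
begin

abbreviation glued :: "'a graph" where
  "glued \<equiv> (fst F3 \<union> fst F4, snd F3 \<union> snd F4)"

lemma edges_disjoint: "snd F3 \<inter> snd F4 = {}"
proof (rule ccontr)
  assume "snd F3 \<inter> snd F4 \<noteq> {}"
  then obtain e where e: "e \<in> snd F3" "e \<in> snd F4"
    by blast
  then have "e \<subseteq> fst F3 \<inter> fst F4"
    using graph3 graph4 by (auto dest: is_graph_edge_subset)
  moreover have "card e = 2"
    using graph3 e(1) is_graph_edges_subset_pairs by blast
  moreover have "finite (fst F3 \<inter> fst F4)"
    using graph3 by (simp add: is_graph_finite_vertices)
  ultimately have "2 \<le> card (fst F3 \<inter> fst F4)"
    by (metis card_mono)
  with card_shared_le show False
    by simp
qed

lemma trace_vertices_subset:
  "fst H \<inter> fst F3 - W3 \<subseteq> fst H - (W3 \<union> W4)"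
  "fst H \<inter> fst F4 - W4 \<subseteq> fst H - (W3 \<union> W4)"
  using spans3 spans4 shared_disjoint_W unfolding spans_no_edges_def by blast+

lemma card_edges_split:
  assumes "subgraph H glued"
  shows "card (snd H) = card (snd (graph_inter H F3)) + card (snd (graph_inter H F4))"
proof -
  have "finite (snd H)"
    using assms unfolding subgraph_def by (blast intro: is_graph_finite_edges)
  then have "card ((snd H \<inter> snd F3) \<union> (snd H \<inter> snd F4))
      = card (snd H \<inter> snd F3) + card (snd H \<inter> snd F4)"
    using edges_disjoint by (intro card_Un_disjoint) auto
  moreover have "(snd H \<inter> snd F3) \<union> (snd H \<inter> snd F4) = snd H"
    using assms unfolding subgraph_def by auto
  ultimately show ?thesis
    by simp
qed

lemma card_vertices_split:
  assumes "subgraph H glued"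
  shows "card (fst H - (W3 \<union> W4)) + card (fst H \<inter> (fst F3 \<inter> fst F4))
    = card (fst (graph_inter H F3) - W3) + card (fst (graph_inter H F4) - W4)"
proof -
  have "finite (fst H)"
    using assms by (rule subgraph_finite_vertices)
  then have "card (fst H \<inter> fst F3 - W3) + card (fst H \<inter> fst F4 - W4)
      = card ((fst H \<inter> fst F3 - W3) \<union> (fst H \<inter> fst F4 - W4))
        + card ((fst H \<inter> fst F3 - W3) \<inter> (fst H \<inter> fst F4 - W4))"
    by (intro card_Un_Int) auto
  moreover have "(fst H \<inter> fst F3 - W3) \<union> (fst H \<inter> fst F4 - W4) = fst H - (W3 \<union> W4)"
    using assms trace_vertices_subset[of H] unfolding subgraph_def by auto
  moreover have "(fst H \<inter> fst F3 - W3) \<inter> (fst H \<inter> fst F4 - W4) = fst H \<inter> (fst F3 \<inter> fst F4)"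
    using shared_disjoint_W by blast
  ultimately show ?thesis
    by simp
qed

lemma Phi_weight_traces_le:
  assumes "subgraph H glued" "0 < n" "0 \<le> p"
  shows "Phi_weight n p W3 (graph_inter H F3) * Phi_weight n p W4 (graph_inter H F4)
    \<le> Phi_weight n p (W3 \<union> W4) H * real n ^ card (fst F3 \<inter> fst F4)"
proof -
  let ?s = "card (fst H \<inter> (fst F3 \<inter> fst F4))"
  have "Phi_weight n p W3 (graph_inter H F3) * Phi_weight n p W4 (graph_inter H F4)
      = real n ^ (card (fst H - (W3 \<union> W4)) + ?s)
        * (p ^ card (snd (graph_inter H F3)) * p ^ card (snd (graph_inter H F4)))"
    unfolding card_vertices_split[OF assms(1)] Phi_weight_def by (simp add: power_add ac_simps)
  also have "\<dots> = Phi_weight n p (W3 \<union> W4) H * real n ^ ?s"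
    unfolding Phi_weight_def card_edges_split[OF assms(1)] by (simp add: power_add ac_simps)
  also have "\<dots> \<le> Phi_weight n p (W3 \<union> W4) H * real n ^ card (fst F3 \<inter> fst F4)"
    using graph3 assms(2,3)
    by (intro mult_left_mono power_increasing card_mono)
      (auto simp: Phi_weight_nonneg is_graph_finite_vertices)
  finally show ?thesis .
qed

lemma Phi_product_le_weight:
  assumes "subgraph H glued" "0 < card (snd (graph_inter H F3))" "0 < card (snd (graph_inter H F4))"
    and "0 < n" "0 \<le> p" "1 \<le> Phi F3 W3 n p" "1 \<le> Phi F4 W4 n p"
  shows "Phi F3 W3 n p * Phi F4 W4 n p / ereal (real n ^ card (fst F3 \<inter> fst F4))
    \<le> ereal (Phi_weight n p (W3 \<union> W4) H)"
proof -
  let ?w3 = "Phi_weight n p W3 (graph_inter H F3)" and ?w4 = "Phi_weight n p W4 (graph_inter H F4)"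
  define N where "N = real n ^ card (fst F3 \<inter> fst F4)"
  have "0 < N"
    unfolding N_def using assms(4) by simp
  have product: "?w3 * ?w4 \<le> Phi_weight n p (W3 \<union> W4) H * N"
    unfolding N_def using assms(1,4,5) by (rule Phi_weight_traces_le)
  have gH: "is_graph H"
    using assms(1) by (simp add: subgraph_def)
  have "Phi F3 W3 n p \<le> ereal ?w3" "Phi F4 W4 n p \<le> ereal ?w4"
    using gH graph3 graph4 assms(2,3) by (auto intro: Phi_le_weight subgraph_graph_inter)
  then have "Phi F3 W3 n p * Phi F4 W4 n p \<le> ereal ?w3 * ereal ?w4"
    using assms(5-7) by (intro ereal_mult_mono) (auto simp: Phi_weight_nonneg intro: order_trans[rotated])
  then have "Phi F3 W3 n p * Phi F4 W4 n p / ereal N \<le> ereal (?w3 * ?w4) / ereal N"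
    using \<open>0 < N\<close> by (intro ereal_divide_right_mono) auto
  also have "\<dots> \<le> ereal (Phi_weight n p (W3 \<union> W4) H)"
    using product \<open>0 < N\<close> by (simp add: divide_le_eq)
  finally show ?thesis
    unfolding N_def .
qed

lemma Phi_glued_ge:
  assumes "0 < n" "0 \<le> p" "1 \<le> Phi F3 W3 n p" "1 \<le> Phi F4 W4 n p"
  shows "min (Phi F3 W3 n p) (min (Phi F4 W4 n p)
      (Phi F3 W3 n p * Phi F4 W4 n p / ereal (real n ^ card (fst F3 \<inter> fst F4))))
    \<le> Phi glued (W3 \<union> W4) n p"
proof (rule Phi_greatest)
  fix H :: "'a graph"
  assume H: "subgraph H glued" "0 < card (snd H)"
  let ?H3 = "graph_inter H F3" and ?H4 = "graph_inter H F4"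
  have gH: "is_graph H" and finH: "finite (fst H)"
    using H(1) by (auto simp: subgraph_def is_graph_finite_vertices)
  note edges = card_edges_split[OF H(1)]
  consider "card (snd ?H4) = 0" | "card (snd ?H3) = 0" | "0 < card (snd ?H3)" "0 < card (snd ?H4)"
    by linarith
  then show "min (Phi F3 W3 n p) (min (Phi F4 W4 n p)
      (Phi F3 W3 n p * Phi F4 W4 n p / ereal (real n ^ card (fst F3 \<inter> fst F4))))
    \<le> ereal (Phi_weight n p (W3 \<union> W4) H)"
  proof cases
    case 1
    have "Phi F3 W3 n p \<le> ereal (Phi_weight n p W3 ?H3)"
      using gH graph3 H(2) edges 1 by (intro Phi_le_weight subgraph_graph_inter) auto
    also have "Phi_weight n p W3 ?H3 \<le> Phi_weight n p (W3 \<union> W4) H"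
      using 1 edges finH trace_vertices_subset[of H] assms(1,2) by (intro Phi_weight_mono) auto
    finally show ?thesis
      by (simp add: min.coboundedI1)
  next
    case 2
    have "Phi F4 W4 n p \<le> ereal (Phi_weight n p W4 ?H4)"
      using gH graph4 H(2) edges 2 by (intro Phi_le_weight subgraph_graph_inter) auto
    also have "Phi_weight n p W4 ?H4 \<le> Phi_weight n p (W3 \<union> W4) H"
      using 2 edges finH trace_vertices_subset[of H] assms(1,2) by (intro Phi_weight_mono) auto
    finally show ?thesis
      by (simp add: min.coboundedI1 min.coboundedI2)
  next
    case 3
    then show ?thesis
      using Phi_product_le_weight[OF H(1) _ _ assms] by (simp add: min.coboundedI2)
  qed
qed

end

lemma Phi_vertex_gluing_ge:
  assumes "is_graph F3" "is_graph F4" "spans_no_edges W3 F3" "spans_no_edges W4 F4"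
    and "fst F3 \<inter> fst F4 = {x}" "x \<notin> W3" "x \<notin> W4"
    and "0 < n" "0 \<le> p" "1 \<le> Phi F3 W3 n p" "1 \<le> Phi F4 W4 n p"
  shows "min (Phi F3 W3 n p) (min (Phi F4 W4 n p) (Phi F3 W3 n p * Phi F4 W4 n p / ereal (real n)))
    \<le> Phi (fst F3 \<union> fst F4, snd F3 \<union> snd F4) (W3 \<union> W4) n p"
proof -
  interpret graph_gluing F3 F4 W3 W4
    using assms(1-7) by unfold_locales auto
  show ?thesis
    using Phi_glued_ge[OF assms(8-11)] unfolding assms(5) by simp
qed

lemma Phi_disjoint_union:
  assumes "is_graph F3" "is_graph F4" "spans_no_edges W3 F3" "spans_no_edges W4 F4"
    and "fst F3 \<inter> fst F4 = {}"
    and "0 < n" "0 \<le> p" "1 \<le> Phi F3 W3 n p" "1 \<le> Phi F4 W4 n p"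
  shows "Phi (fst F3 \<union> fst F4, snd F3 \<union> snd F4) (W3 \<union> W4) n p
    = min (Phi F3 W3 n p) (Phi F4 W4 n p)"
proof (rule antisym)
  have "Phi (fst F3 \<union> fst F4, snd F3 \<union> snd F4) (W3 \<union> W4) n p \<le> Phi F3 W3 n p"
    using assms(1,6,7) by (intro Phi_antimono_subgraph) (auto simp: subgraph_def)
  moreover have "Phi (fst F3 \<union> fst F4, snd F3 \<union> snd F4) (W3 \<union> W4) n p \<le> Phi F4 W4 n p"
    using assms(2,6,7) by (intro Phi_antimono_subgraph) (auto simp: subgraph_def)
  ultimately show "Phi (fst F3 \<union> fst F4, snd F3 \<union> snd F4) (W3 \<union> W4) n p
      \<le> min (Phi F3 W3 n p) (Phi F4 W4 n p)"
    by simp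
next
  interpret graph_gluing F3 F4 W3 W4
    using assms(1-5) by unfold_locales auto
  have "(0::ereal) \<le> 1"
    by simp
  then have "0 \<le> Phi F3 W3 n p"
    using assms(8) by (rule order_trans)
  then have "Phi F3 W3 n p \<le> Phi F3 W3 n p * Phi F4 W4 n p"
    using ereal_mult_left_mono[OF assms(9)] by fastforce
  then have "min (Phi F3 W3 n p) (Phi F4 W4 n p)
      \<le> min (Phi F3 W3 n p) (min (Phi F4 W4 n p)
        (Phi F3 W3 n p * Phi F4 W4 n p / ereal (real n ^ card (fst F3 \<inter> fst F4))))"
    unfolding assms(5) by (simp add: min.coboundedI1 one_ereal_def[symmetric])
  also have "\<dots> \<le> Phi (fst F3 \<union> fst F4, snd F3 \<union> snd F4) (W3 \<union> W4) n p"
    using Phi_glued_ge[OF assms(6-9)] .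
  finally show "min (Phi F3 W3 n p) (Phi F4 W4 n p)
      \<le> Phi (fst F3 \<union> fst F4, snd F3 \<union> snd F4) (W3 \<union> W4) n p" .
qed

theorem lemma2p7:
  shows
  "(\<forall>(C::real) (k::nat) (n::nat) (p::real) (k'::nat).
      C > 1 \<longrightarrow> k \<ge> 2 \<longrightarrow> n > 0 \<longrightarrow> p \<ge> C * real n powr (- 2 / real k) \<longrightarrow> p \<le> 1 \<longrightarrow>
      k' \<le> k \<longrightarrow> Phi (complete_graph k') {} n p \<ge> ereal (C * real n))
   \<and>
   (\<forall>(C::real) (k::nat) (n::nat) (p::real) (k'::nat) (w::nat).
      C > 1 \<longrightarrow> k \<ge> 2 \<longrightarrow> n > 0 \<longrightarrow> p \<ge> C * real n powr (- 2 / real k) \<longrightarrow> p \<le> 1 \<longrightarrow>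
      3 \<le> k' \<longrightarrow> k' \<le> k \<longrightarrow> w \<in> {0, 1} \<longrightarrow>
      Phi (complete_graph_minus k') {} n p \<ge> ereal (C * real n) \<and>
      Phi (complete_graph_minus k') {w} n p
        \<ge> ereal (min (C * real n powr (1 - 2 / real k)) (C * real n powr (2 / real k))) \<and>
      min (C * real n powr (1 - 2 / real k)) (C * real n powr (2 / real k))
        \<ge> C * real n powr (1 / real k))
   \<and>
   (\<forall>(n::nat) (p::real) (F3::'a graph) (F4::'a graph) W3 W4.
      n > 0 \<longrightarrow> 0 \<le> p \<longrightarrow> p \<le> 1 \<longrightarrow> is_graph F3 \<longrightarrow> is_graph F4 \<longrightarrow>
      spans_no_edges W3 F3 \<longrightarrow> spans_no_edges W4 F4 \<longrightarrow>
      Phi F3 W3 n p \<ge> 1 \<longrightarrow> Phi F4 W4 n p \<ge> 1 \<longrightarrow>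
      (\<forall>x. fst F3 \<inter> fst F4 = {x} \<longrightarrow> x \<notin> W3 \<longrightarrow> x \<notin> W4 \<longrightarrow>
         Phi (fst F3 \<union> fst F4, snd F3 \<union> snd F4) (W3 \<union> W4) n p
           \<ge> min (Phi F3 W3 n p) (min (Phi F4 W4 n p)
                 (Phi F3 W3 n p * Phi F4 W4 n p / ereal (real n))))
      \<and>
      (fst F3 \<inter> fst F4 = {} \<longrightarrow>
         Phi (fst F3 \<union> fst F4, snd F3 \<union> snd F4) (W3 \<union> W4) n p
           = min (Phi F3 W3 n p) (Phi F4 W4 n p)))"
  apply (intro conjI allI impI)
  subgoal by (rule Phi_complete_graph_ge; assumption)
  subgoal by (rule Phi_complete_graph_minus_ge; assumption)
  subgoal by (rule Phi_complete_graph_minus_singleton_ge; assumption)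
  subgoal by (rule powr_one_div_le_min_powr) auto
  subgoal by (rule Phi_vertex_gluing_ge; assumption)
  subgoal by (rule Phi_disjoint_union; assumption)
  done

end
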